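(* Let $\varepsilon>0$ and $m(x)=\tanh x$. For $\mathcal{E}\in(0,1)$ let $x_\pm=\pm\operatorname{arctanh}(\sqrt{\mathcal{E}})$ be the two solutions of $\tanh^2 x=\mathcal{E}$, and define $$\Phi(\mathcal{E}):=\frac{1}{\varepsilon}\int_{x_-}^{x_+}\sqrt{\mathcal{E}-\tanh^2 x}\,dx,$$ with $\Phi(0):=0$. Then $\Phi(\mathcal{E})=\frac{\pi}{\varepsilon}\bigl(1-\sqrt{1-\mathcal{E}}\bigr)$ for $\mathcal{E}\in[0,1)$. Consequently, for $\sigma_{\mathcal{D}}\in\{-1,+1\}$ and integers $n\ge0$ with $0\le\varepsilon\bigl(n+\frac{\sigma_{\mathcal{D}}+1}{2}\bigr)<1$, the (exact, error-free) modified Bohr–Sommerfeld condition $$\Phi(\mathcal{E})=\Bigl(n+\frac{\sigma_{\mathcal{D}}+1}{2}\Bigr)\pi$$ has the unique solution $\mathcal{E}\in[0,1)$ given by $$\mathcal{E}_n^{(\sigma_{\mathcal{D}})}=1-\Bigl[1-\varepsilon\Bigl(n+\frac{\sigma_{\mathcal{D}}+1}{2}\Bigr)\Bigr]^2 .$$ In particular $\mathcal{E}_n^{(-1)}=1-(1-\varepsilon n)^2=\lambda_n^{(+)}$ and $\mathcal{E}_n^{(+1)}=1-(1-\varepsilon(n+1))^2=\lambda_n^{(-)}$ coincide exactly with the Pöschl–Teller eigenvalues of the upper and lower components of $D_\varepsilon^2$, and $n=0$, $\sigma_{\mathcal{D}}=-1$ gives $\mathcal{E}=0$.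
   Context: $D_\varepsilon=\begin{bmatrix}0 & m-\varepsilon\partial_x\\ m+\varepsilon\partial_x & 0\end{bmatrix}$ with $m=\tanh$, so $D_\varepsilon^2=\operatorname{diag}(-\varepsilon^2\partial_x^2+\tanh^2x-\varepsilon\operatorname{sech}^2x,\;-\varepsilon^2\partial_x^2+\tanh^2x+\varepsilon\operatorname{sech}^2x)$; the pseudo-spin index $\sigma_{\mathcal{D}}=-1$ labels the upper component and $\sigma_{\mathcal{D}}=+1$ the lower. The numbers $\lambda_k^{(+)}=1-(1-\varepsilon k)^2$ and $\lambda_k^{(-)}=1-(1-\varepsilon(k+1))^2$ are the discrete eigenvalues of the upper and lower components respectively. *)

theory Defs
  imports "HOL-Analysis.Analysis"
begin

definition Phi :: "real \<Rightarrow> real \<Rightarrow> real" where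
  "Phi \<epsilon> E = (if E = 0 then 0 else
     (1 / \<epsilon>) * integral {- artanh (sqrt E) .. artanh (sqrt E)}
        (\<lambda>x. sqrt (E - (tanh x)\<^sup>2)))"

definition lambda_plus :: "real \<Rightarrow> nat \<Rightarrow> real" where
  "lambda_plus \<epsilon> k = 1 - (1 - \<epsilon> * real k)\<^sup>2"

definition lambda_minus :: "real \<Rightarrow> nat \<Rightarrow> real" where
  "lambda_minus \<epsilon> k = 1 - (1 - \<epsilon> * (real k + 1))\<^sup>2"

definition E_BS :: "real \<Rightarrow> int \<Rightarrow> nat \<Rightarrow> real" where
  "E_BS \<epsilon> \<sigma> n = 1 - (1 - \<epsilon> * (real n + (real_of_int \<sigma> + 1) / 2))\<^sup>2"

end

theory Submission
  imports Defs
begin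

text \<open>The integrand has an elementary primitive,
  \<open>arcsin (tanh x / \<surd>E) - \<surd>(1 - E) * arcsin (\<surd>(1 - E) * sinh x / \<surd>E)\<close>,
  whose two arcsin arguments are exactly \<open>\<plusminus>1\<close> at the turning points \<open>\<plusminus>artanh \<surd>E\<close>;
  hence \<open>\<epsilon> * Phi \<epsilon> E = \<pi> * (1 - \<surd>(1 - E))\<close>. The Bohr--Sommerfeld condition then reads
  \<open>\<surd>(1 - E) = 1 - \<epsilon> * N\<close>, which has the single solution \<open>E = 1 - (1 - \<epsilon> * N)\<^sup>2\<close>.\<close>

lemma tanh_artanh_real:
  assumes "-1 < y" "y < (1::real)"
  shows "tanh (artanh y) = y"
proof -
  have "-2 * artanh y = ln ((1 - y) / (1 + y))"
    using assms by (simp add: artanh_def ln_div)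
  then have exp_eq: "exp (-2 * artanh y) = (1 - y) / (1 + y)"
    using assms by simp
  show ?thesis
    unfolding tanh_real_altdef exp_eq using assms by (simp add: field_simps)
qed

lemma cosh_sq_mult_one_minus_tanh_sq: "(cosh x)\<^sup>2 * (1 - (tanh x)\<^sup>2) = (1::real)"
proof -
  have "(cosh x)\<^sup>2 * (1 - (tanh x)\<^sup>2) = (cosh x)\<^sup>2 - (sinh x)\<^sup>2"
    using cosh_real_pos[of x] by (simp add: tanh_def field_simps)
  then show ?thesis
    by (simp add: cosh_square_eq)
qed

lemma tanh_artanh_sqrt:
  assumes "0 \<le> E" "E < 1"
  shows "tanh (artanh (sqrt E)) = sqrt E"
  by (rule tanh_artanh_real) (use real_sqrt_ge_zero[OF assms(1)] assms(2) in \<open>linarith, simp\<close>)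

lemma tanh_sq_le_iff:
  assumes "0 \<le> E" "E < 1"
  shows "(tanh x)\<^sup>2 \<le> E \<longleftrightarrow> \<bar>x\<bar> \<le> artanh (sqrt E)"
proof -
  have "(tanh x)\<^sup>2 \<le> E \<longleftrightarrow> tanh \<bar>x\<bar> \<le> sqrt E"
    by (metis real_sqrt_abs real_sqrt_le_iff tanh_real_abs)
  then show ?thesis
    using tanh_real_le_iff[of "\<bar>x\<bar>" "artanh (sqrt E)"] by (simp only: tanh_artanh_sqrt assms)
qed

lemma tanh_sq_less_iff:
  assumes "0 \<le> E" "E < 1"
  shows "(tanh x)\<^sup>2 < E \<longleftrightarrow> \<bar>x\<bar> < artanh (sqrt E)"
proof -
  have "(tanh x)\<^sup>2 < E \<longleftrightarrow> tanh \<bar>x\<bar> < sqrt E"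
    by (metis real_sqrt_abs real_sqrt_less_iff tanh_real_abs)
  then show ?thesis
    using tanh_real_less_iff[of "\<bar>x\<bar>" "artanh (sqrt E)"] by (simp only: tanh_artanh_sqrt assms)
qed

definition action_primitive :: "real \<Rightarrow> real \<Rightarrow> real" where
  "action_primitive E x =
     arcsin (tanh x / sqrt E) - sqrt (1 - E) * arcsin (sqrt (1 - E) * sinh x / sqrt E)"

lemma one_minus_sq_tanh_div_sqrt:
  assumes "0 < E"
  shows "1 - (tanh x / sqrt E)\<^sup>2 = (E - (tanh x)\<^sup>2) / E"
  using assms by (simp add: field_simps)

lemma one_minus_sq_sinh_div_sqrt:
  assumes "0 < E" "E \<le> 1"
  shows "1 - (sqrt (1 - E) * sinh x / sqrt E)\<^sup>2 = (cosh x)\<^sup>2 * (E - (tanh x)\<^sup>2) / E"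
proof -
  have "sinh x = tanh x * cosh x"
    by (simp add: tanh_def)
  then have "(sqrt (1 - E) * sinh x / sqrt E)\<^sup>2 = (1 - E) * (tanh x)\<^sup>2 * (cosh x)\<^sup>2 / E"
    using assms by (simp add: power_mult_distrib power_divide)
  moreover have "E = E * ((cosh x)\<^sup>2 * (1 - (tanh x)\<^sup>2))"
    by (simp add: cosh_sq_mult_one_minus_tanh_sq)
  ultimately show ?thesis
    using assms by (simp add: field_simps)
qed

lemma continuous_on_action_primitive:
  assumes "0 < E" "E < 1"
  shows "continuous_on {-artanh (sqrt E)..artanh (sqrt E)} (action_primitive E)"
proof -
  have args: "\<bar>tanh x / sqrt E\<bar> \<le> 1" "\<bar>sqrt (1 - E) * sinh x / sqrt E\<bar> \<le> 1"
    if "x \<in> {-artanh (sqrt E)..artanh (sqrt E)}" for x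
  proof -
    have "(tanh x)\<^sup>2 \<le> E"
      using that assms by (simp add: tanh_sq_le_iff abs_le_iff)
    then have "0 \<le> 1 - (tanh x / sqrt E)\<^sup>2" "0 \<le> 1 - (sqrt (1 - E) * sinh x / sqrt E)\<^sup>2"
      using assms by (simp_all add: one_minus_sq_tanh_div_sqrt one_minus_sq_sinh_div_sqrt)
    then show "\<bar>tanh x / sqrt E\<bar> \<le> 1" "\<bar>sqrt (1 - E) * sinh x / sqrt E\<bar> \<le> 1"
      by (simp_all only: diff_ge_0_iff_ge abs_square_le_1)
  qed
  show ?thesis
    unfolding action_primitive_def
    by (intro continuous_on_diff continuous_on_mult_left continuous_on_arcsin ballI
        continuous_intros) (use assms args in \<open>auto simp del: abs_divide simp: abs_le_iff\<close>)
qed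

lemma has_real_derivative_action_primitive:
  assumes "0 < E" "E \<le> 1" "(tanh x)\<^sup>2 < E"
  shows "(action_primitive E has_real_derivative sqrt (E - (tanh x)\<^sup>2)) (at x)"
proof -
  define k c T where "k = sqrt E" and "c = sqrt (1 - E)" and "T = tanh x"
  have k: "0 < k" "k\<^sup>2 = E" and c: "c\<^sup>2 = 1 - E" and "0 < sqrt (E - T\<^sup>2)"
    using assms by (simp_all add: k_def c_def T_def)
  have sqrt1: "sqrt (1 - (T / k)\<^sup>2) = sqrt (E - T\<^sup>2) / k"
    using assms by (simp add: one_minus_sq_tanh_div_sqrt real_sqrt_divide k_def T_def)
  have sqrt2: "sqrt (1 - (c * sinh x / k)\<^sup>2) = cosh x * sqrt (E - T\<^sup>2) / k"
    using assms by (simp add: one_minus_sq_sinh_div_sqrt real_sqrt_divide real_sqrt_mult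
        k_def c_def T_def)
  have "0 < 1 - (T / k)\<^sup>2" "0 < 1 - (c * sinh x / k)\<^sup>2"
    using assms by (simp_all add: one_minus_sq_tanh_div_sqrt one_minus_sq_sinh_div_sqrt
        k_def c_def T_def)
  then have bound1: "-1 < T / k \<and> T / k < 1"
    and bound2: "-1 < c * sinh x / k \<and> c * sinh x / k < 1"
    by (simp_all only: diff_gt_0_iff_gt abs_square_less_1 abs_less_iff) auto
  have "((\<lambda>x. arcsin (tanh x / k)) has_real_derivative
      inverse (sqrt (1 - (T / k)\<^sup>2)) * ((1 - T\<^sup>2) / k)) (at x)"
    using bound1 k unfolding T_def
    by (intro DERIV_chain2[OF DERIV_arcsin]) (auto intro!: derivative_eq_intros)
  moreover have "((\<lambda>x. arcsin (c * sinh x / k)) has_real_derivative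
      inverse (sqrt (1 - (c * sinh x / k)\<^sup>2)) * (c * cosh x / k)) (at x)"
    using bound2 k by (intro DERIV_chain2[OF DERIV_arcsin]) (auto intro!: derivative_eq_intros)
  ultimately have "(action_primitive E has_real_derivative
      inverse (sqrt (1 - (T / k)\<^sup>2)) * ((1 - T\<^sup>2) / k)
      - c * (inverse (sqrt (1 - (c * sinh x / k)\<^sup>2)) * (c * cosh x / k))) (at x)"
    unfolding action_primitive_def k_def [symmetric] c_def [symmetric]
    by (intro DERIV_diff DERIV_cmult)
  also have "inverse (sqrt (1 - (T / k)\<^sup>2)) * ((1 - T\<^sup>2) / k)
      - c * (inverse (sqrt (1 - (c * sinh x / k)\<^sup>2)) * (c * cosh x / k))
      = (1 - T\<^sup>2 - c\<^sup>2) / sqrt (E - T\<^sup>2)"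
    using k \<open>0 < sqrt (E - T\<^sup>2)\<close> cosh_real_pos[of x]
    unfolding sqrt1 sqrt2 by (simp add: field_simps power2_eq_square)
  also have "\<dots> = sqrt (E - T\<^sup>2)"
    using c \<open>0 < sqrt (E - T\<^sup>2)\<close> by (simp add: field_simps)
  finally show ?thesis
    by (simp add: T_def)
qed

lemma action_primitive_turning_points:
  assumes "0 < E" "E < 1"
  shows "action_primitive E (artanh (sqrt E)) = pi / 2 * (1 - sqrt (1 - E))"
    and "action_primitive E (- artanh (sqrt E)) = - pi / 2 * (1 - sqrt (1 - E))"
proof -
  define a where "a = artanh (sqrt E)"
  have tanh_a: "tanh a = sqrt E"
    unfolding a_def using assms by (simp add: tanh_artanh_sqrt)
  then have "0 < a"
    using assms by (metis real_sqrt_gt_zero tanh_real_pos_iff)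
  have "(sqrt (1 - E) * sinh a / sqrt E)\<^sup>2 = 1"
    using one_minus_sq_sinh_div_sqrt[of E a] assms by (simp add: tanh_a)
  moreover have "0 < sqrt (1 - E) * sinh a / sqrt E"
    using assms \<open>0 < a\<close> by simp
  ultimately have sinh_a: "sqrt (1 - E) * sinh a / sqrt E = 1"
    by (metis abs_of_pos power2_eq_1_iff abs_minus_cancel abs_one)
  show "action_primitive E a = pi / 2 * (1 - sqrt (1 - E))"
    unfolding action_primitive_def tanh_a sinh_a using assms by (simp add: algebra_simps)
  show "action_primitive E (- a) = - pi / 2 * (1 - sqrt (1 - E))"
  proof -
    have "sqrt (1 - E) * sinh (- a) / sqrt E = -1"
      using sinh_a by (metis minus_divide_left mult_minus_right sinh_minus)
    then show ?thesis
      unfolding action_primitive_def tanh_minus tanh_a using assms \<open>0 < a\<close>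
      by (simp add: algebra_simps)
  qed
qed

lemma has_integral_sqrt_minus_tanh_sq:
  assumes "0 < E" "E < 1"
  shows "((\<lambda>x. sqrt (E - (tanh x)\<^sup>2)) has_integral pi * (1 - sqrt (1 - E)))
           {-artanh (sqrt E)..artanh (sqrt E)}"
proof -
  have "0 < artanh (sqrt E)"
    using tanh_sq_less_iff[of E 0] assms by simp
  moreover have "(action_primitive E has_vector_derivative sqrt (E - (tanh x)\<^sup>2)) (at x)"
    if "x \<in> {-artanh (sqrt E)<..<artanh (sqrt E)}" for x
    using that assms
    by (auto simp: has_real_derivative_iff_has_vector_derivative [symmetric] tanh_sq_less_iff
        intro!: has_real_derivative_action_primitive)
  ultimately have "((\<lambda>x. sqrt (E - (tanh x)\<^sup>2)) has_integral
      action_primitive E (artanh (sqrt E)) - action_primitive E (- artanh (sqrt E)))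
      {-artanh (sqrt E)..artanh (sqrt E)}"
    using assms by (intro fundamental_theorem_of_calculus_interior continuous_on_action_primitive) auto
  then show ?thesis
    using assms by (simp add: action_primitive_turning_points algebra_simps)
qed

lemma Phi_eq_closed_form:
  assumes "0 \<le> E" "E < 1"
  shows "Phi \<epsilon> E = pi / \<epsilon> * (1 - sqrt (1 - E))"
proof (cases "E = 0")
  case False
  then have "integral {-artanh (sqrt E)..artanh (sqrt E)} (\<lambda>x. sqrt (E - (tanh x)\<^sup>2))
      = pi * (1 - sqrt (1 - E))"
    using assms by (intro integral_unique has_integral_sqrt_minus_tanh_sq) auto
  then show ?thesis
    using False by (simp add: Phi_def)
qed (simp add: Phi_def)

lemma pi_div_mult_one_minus_sqrt_eq_iff:
  fixes \<epsilon> N E :: real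
  assumes "0 < \<epsilon>" "\<epsilon> * N \<le> 1" "E \<le> 1"
  shows "pi / \<epsilon> * (1 - sqrt (1 - E)) = N * pi \<longleftrightarrow> E = 1 - (1 - \<epsilon> * N)\<^sup>2"
proof -
  have "pi / \<epsilon> * (1 - sqrt (1 - E)) = N * pi \<longleftrightarrow> pi * (1 - sqrt (1 - E)) = pi * (\<epsilon> * N)"
    using assms by (auto simp: field_simps)
  also have "\<dots> \<longleftrightarrow> sqrt (1 - E) = 1 - \<epsilon> * N"
    by auto
  also have "\<dots> \<longleftrightarrow> 1 - E = (1 - \<epsilon> * N)\<^sup>2"
    using assms by (metis diff_ge_0_iff_ge real_sqrt_pow2 real_sqrt_unique)
  finally show ?thesis
    by auto
qed

lemma one_minus_sq_one_minus_mem_atLeastLessThan: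
  fixes t :: real
  assumes "0 \<le> t" "t < 1"
  shows "1 - (1 - t)\<^sup>2 \<in> {0..<1}"
  using assms by (simp add: power_le_one)

theorem proposition5p1:
  fixes \<epsilon> :: real
  assumes "\<epsilon> > 0"
  shows "(\<forall>E\<in>{0..<1}. Phi \<epsilon> E = pi / \<epsilon> * (1 - sqrt (1 - E)))
    \<and> (\<forall>\<sigma>\<in>{-1, 1::int}. \<forall>n::nat.
          0 \<le> \<epsilon> * (real n + (real_of_int \<sigma> + 1) / 2)
          \<and> \<epsilon> * (real n + (real_of_int \<sigma> + 1) / 2) < 1 \<longrightarrow>
          E_BS \<epsilon> \<sigma> n \<in> {0..<1}
          \<and> (\<forall>E\<in>{0..<1}. Phi \<epsilon> E = (real n + (real_of_int \<sigma> + 1) / 2) * pi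
                 \<longleftrightarrow> E = E_BS \<epsilon> \<sigma> n))
    \<and> (\<forall>n. E_BS \<epsilon> (-1) n = lambda_plus \<epsilon> n \<and> E_BS \<epsilon> 1 n = lambda_minus \<epsilon> n)
    \<and> E_BS \<epsilon> (-1) 0 = 0"
proof (intro conjI ballI allI impI)
  show "Phi \<epsilon> E = pi / \<epsilon> * (1 - sqrt (1 - E))" if "E \<in> {0..<1}" for E
    using that by (simp add: Phi_eq_closed_form)
next
  fix \<sigma> :: int and n :: nat
  define N where "N = real n + (real_of_int \<sigma> + 1) / 2"
  assume "0 \<le> \<epsilon> * (real n + (real_of_int \<sigma> + 1) / 2)
    \<and> \<epsilon> * (real n + (real_of_int \<sigma> + 1) / 2) < 1"
  then have N: "0 \<le> \<epsilon> * N" "\<epsilon> * N < 1"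
    by (simp_all add: N_def)
  have E_BS: "E_BS \<epsilon> \<sigma> n = 1 - (1 - \<epsilon> * N)\<^sup>2"
    by (simp add: E_BS_def N_def)
  show "E_BS \<epsilon> \<sigma> n \<in> {0..<1}"
    unfolding E_BS using N by (rule one_minus_sq_one_minus_mem_atLeastLessThan)
  show "Phi \<epsilon> E = (real n + (real_of_int \<sigma> + 1) / 2) * pi \<longleftrightarrow> E = E_BS \<epsilon> \<sigma> n"
    if "E \<in> {0..<1}" for E
    using that Phi_eq_closed_form[of E \<epsilon>] pi_div_mult_one_minus_sqrt_eq_iff[OF assms, of N E] N
    by (simp add: E_BS flip: N_def)
qed (simp_all add: E_BS_def lambda_plus_def lambda_minus_def)

end
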